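(* Let $p,m,n\ge 1$ and $M>1$ be integers, let $N$ be the number of workers, and let $\mathbb{F}$ be a sufficiently large finite field. For fully private coded matrix multiplication (as described in the context) there exist linear coding schemes that achieve a recovery threshold of $2R(p,m,n)+1$.
   Context: Fully private coded matrix multiplication: given lists $\boldsymbol{A}=(A^{(1)},\dots,A^{(M)})$ with $A^{(\ell)}\in\mathbb{F}^{s\times t}$ and $\boldsymbol{B}=(B^{(1)},\dots,B^{(M)})$ with $B^{(\ell)}\in\mathbb{F}^{s\times r}$, and an index $D\in[M]$, the master wants ${A^{(D)}}^\intercal B^{(D)}$. Assume $p\mid s$, $m\mid t$, $n\mid r$; each $A^{(\ell)}$ is partitioned into a $p$-by-$m$ grid of equal-size blocks and each $B^{(\ell)}$ into a $p$-by-$n$ grid of equal-size blocks. There are $N$ workers. The master sends worker $i$ a (possibly random) query $Q_i$ depending on $D$; worker $i$ encodes $\boldsymbol{A}$ into $\tilde A_i\in\mathbb{F}^{\frac{s}{p}\times\frac{t}{m}}$ and $\boldsymbol{B}$ into $\tilde B_i\in\mathbb{F}^{\frac{s}{p}\times\frac{r}{n}}$, each a linear combination of the respective blocks with coefficients determined by $Q_i$, computes $\tilde A_i^\intercal\tilde B_i$ and returns it. The master decodes by linear combinations of the received results (coefficients may depend on $D$ and the queries). A scheme achieves recovery threshold $K$ if the master can recover ${A^{(D)}}^\intercal B^{(D)}$ from the results of any subset of $K$ workers. Privacy requirement: $I(D;Q_i,\boldsymbol{A},\boldsymbol{B})=0$ for every $i\in[N]$, where $\boldsymbol{A},\boldsymbol{B},D$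 are uniformly random. $R(p,m,n)$ denotes the bilinear complexity (tensor rank of the matrix multiplication tensor) of multiplying an $m$-by-$p$ matrix by a $p$-by-$n$ matrix. *)

theory Defs
  imports "HOL-Algebra.Ring" "HOL-Probability.Probability_Mass_Function"
begin

text \<open>Matrices are represented as functions nat => nat => 'a, with explicit dimension
bounds.
Indices are 0-based: files l < M, workers i < N, block rows u < p, block columns j < m, k < n.\<close>

type_synonym 'a mat = "nat \<Rightarrow> nat \<Rightarrow> 'a"

definition mat_in :: "'a ring \<Rightarrow> nat \<Rightarrow> nat \<Rightarrow> 'a mat \<Rightarrow> bool" where
  "mat_in F a b X \<longleftrightarrow> (\<forall>i<a. \<forall>j<b. X i j \<in> carrier F)"

definition bilinear_alg :: "'a ring \<Rightarrow> nat \<Rightarrow> nat \<Rightarrow> nat \<Rightarrow> nat \<Rightarrow> bool" where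
  "bilinear_alg F p m n r \<longleftrightarrow>
    (\<exists>u v w.
       (\<forall>q<r. \<forall>a<m. \<forall>b<p. u q a b \<in> carrier F) \<and>
       (\<forall>q<r. \<forall>b<p. \<forall>c<n. v q b c \<in> carrier F) \<and>
       (\<forall>q<r. \<forall>a<m. \<forall>c<n. w q a c \<in> carrier F) \<and>
       (\<forall>X Y. mat_in F m p X \<longrightarrow> mat_in F p n Y \<longrightarrow>
          (\<forall>a<m. \<forall>c<n.
             (\<Oplus>\<^bsub>F\<^esub>b\<in>{..<p}. X a b \<otimes>\<^bsub>F\<^esub> Y b c) =
             (\<Oplus>\<^bsub>F\<^esub>q\<in>{..<r}.
                ((\<Oplus>\<^bsub>F\<^esub>ab\<in>{..<m} \<times> {..<p}. u q (fst ab) (snd ab) \<otimes>\<^bsub>F\<^esub> X (fst ab) (snd ab))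
                 \<otimes>\<^bsub>F\<^esub>
                 (\<Oplus>\<^bsub>F\<^esub>bc\<in>{..<p} \<times> {..<n}. v q (fst bc) (snd bc) \<otimes>\<^bsub>F\<^esub> Y (fst bc) (snd bc)))
                \<otimes>\<^bsub>F\<^esub> w q a c))))"

text \<open>Bilinear complexity R(p,m,n) over F (= tensor rank of the matrix multiplication tensor).\<close>
definition bilinear_complexity :: "'a ring \<Rightarrow> nat \<Rightarrow> nat \<Rightarrow> nat \<Rightarrow> nat" where
  "bilinear_complexity F p m n = (LEAST r. bilinear_alg F p m n r)"

text \<open>A query to one worker: the encoding coefficients
  (alpha l u j) for block (u,j) of A^(l) and (beta l u k) for block (u,k) of B^(l).\<close>
type_synonym 'a query = "(nat \<Rightarrow> nat \<Rightarrow> nat \<Rightarrow> 'a) \<times> (nat \<Rightarrow> nat \<Rightarrow> nat \<Rightarrow> 'a)"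

definition query_in :: "'a ring \<Rightarrow> nat \<Rightarrow> nat \<Rightarrow> nat \<Rightarrow> nat \<Rightarrow> 'a query \<Rightarrow> bool" where
  "query_in F p m n M Q \<longleftrightarrow>
     (\<forall>l<M. \<forall>u<p. \<forall>j<m. fst Q l u j \<in> carrier F) \<and>
     (\<forall>l<M. \<forall>u<p. \<forall>k<n. snd Q l u k \<in> carrier F)"

definition encA :: "'a ring \<Rightarrow> nat \<Rightarrow> nat \<Rightarrow> nat \<Rightarrow> nat \<Rightarrow> nat \<Rightarrow>
    (nat \<Rightarrow> nat \<Rightarrow> nat \<Rightarrow> 'a) \<Rightarrow> (nat \<Rightarrow> 'a mat) \<Rightarrow> 'a mat" where
  "encA F p m M s t alpha A = (\<lambda>x y.
     \<Oplus>\<^bsub>F\<^esub>luj\<in>{..<M} \<times> {..<p} \<times> {..<m}.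
        alpha (fst luj) (fst (snd luj)) (snd (snd luj)) \<otimes>\<^bsub>F\<^esub>
        A (fst luj) (fst (snd luj) * (s div p) + x) (snd (snd luj) * (t div m) + y))"

definition encB :: "'a ring \<Rightarrow> nat \<Rightarrow> nat \<Rightarrow> nat \<Rightarrow> nat \<Rightarrow> nat \<Rightarrow>
    (nat \<Rightarrow> nat \<Rightarrow> nat \<Rightarrow> 'a) \<Rightarrow> (nat \<Rightarrow> 'a mat) \<Rightarrow> 'a mat" where
  "encB F p n M s r beta B = (\<lambda>x y.
     \<Oplus>\<^bsub>F\<^esub>luk\<in>{..<M} \<times> {..<p} \<times> {..<n}.
        beta (fst luk) (fst (snd luk)) (snd (snd luk)) \<otimes>\<^bsub>F\<^esub>
        B (fst luk) (fst (snd luk) * (s div p) + x) (snd (snd luk) * (r div n) + y))"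

definition worker_result :: "'a ring \<Rightarrow> nat \<Rightarrow> nat \<Rightarrow> nat \<Rightarrow> nat \<Rightarrow> nat \<Rightarrow> nat \<Rightarrow> nat \<Rightarrow>
    'a query \<Rightarrow> (nat \<Rightarrow> 'a mat) \<Rightarrow> (nat \<Rightarrow> 'a mat) \<Rightarrow> 'a mat" where
  "worker_result F p m n M s t r Q A B = (\<lambda>x y.
     \<Oplus>\<^bsub>F\<^esub>z\<in>{..<s div p}.
        encA F p m M s t (fst Q) A z x \<otimes>\<^bsub>F\<^esub> encB F p n M s r (snd Q) B z y)"

definition target :: "'a ring \<Rightarrow> nat \<Rightarrow> (nat \<Rightarrow> 'a mat) \<Rightarrow> (nat \<Rightarrow> 'a mat) \<Rightarrow> nat \<Rightarrow> 'a mat" where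
  "target F s A B d = (\<lambda>x y. \<Oplus>\<^bsub>F\<^esub>z\<in>{..<s}. A d z x \<otimes>\<^bsub>F\<^esub> B d z y)"

text \<open>A (randomised) linear scheme: for each desired index d < M, mu d is the joint
distribution of the queries (Q_0, ..., Q_{N-1}) sent to the N workers.
Privacy: the distribution of Q_i does not depend on d (equivalent to I(D; Q_i, A, B) = 0,
since queries depend only on D and the master's randomness, and A, B are independent of D).\<close>
definition valid_private_scheme :: "'a ring \<Rightarrow> nat \<Rightarrow> nat \<Rightarrow> nat \<Rightarrow> nat \<Rightarrow> nat \<Rightarrow>
    (nat \<Rightarrow> (nat \<Rightarrow> 'a query) pmf) \<Rightarrow> bool" where
  "valid_private_scheme F p m n M N mu \<longleftrightarrow>
     (\<forall>d<M. finite (set_pmf (mu d))) \<and>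
     (\<forall>d<M. \<forall>Q\<in>set_pmf (mu d). \<forall>i<N. query_in F p m n M (Q i)) \<and>
     (\<forall>i<N. \<forall>d<M. \<forall>d'<M. map_pmf (\<lambda>Q. Q i) (mu d) = map_pmf (\<lambda>Q. Q i) (mu d'))"

definition achieves_threshold :: "'a ring \<Rightarrow> nat \<Rightarrow> nat \<Rightarrow> nat \<Rightarrow> nat \<Rightarrow> nat \<Rightarrow>
    nat \<Rightarrow> nat \<Rightarrow> nat \<Rightarrow> (nat \<Rightarrow> (nat \<Rightarrow> 'a query) pmf) \<Rightarrow> nat \<Rightarrow> bool" where
  "achieves_threshold F p m n M N s t r mu K \<longleftrightarrow>
     (\<forall>d<M. \<forall>Q\<in>set_pmf (mu d). \<forall>S. S \<subseteq> {..<N} \<and> card S = K \<longrightarrow>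
        (\<exists>c. (\<forall>j<m. \<forall>k<n. \<forall>i\<in>S. c j k i \<in> carrier F) \<and>
             (\<forall>A B. (\<forall>l<M. mat_in F s t (A l)) \<longrightarrow> (\<forall>l<M. mat_in F s r (B l)) \<longrightarrow>
                (\<forall>j<m. \<forall>k<n. \<forall>x<t div m. \<forall>y<r div n.
                   target F s A B d (j * (t div m) + x) (k * (r div n) + y) =
                   (\<Oplus>\<^bsub>F\<^esub>i\<in>S. c j k i \<otimes>\<^bsub>F\<^esub>
                        worker_result F p m n M s t r (Q i) A B x y)))))"

end

theory Submission
  imports Defs
begin

text \<open>
  Fix a bilinear algorithm (u_q, v_q, w_q), q < R, of rank R = R(p,m,n), distinct nodes
  \<beta>_q (q < R) and distinct worker points \<alpha>_i outside them, and let P(z) be the product of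
  the z - \<beta>_q. For the desired index D, the coefficients used to encode the blocks of the
  A^(l) are polynomials in z: on file D they interpolate the u_q at the nodes, on the other
  files they vanish, and to all of them P(z) times a uniformly random tensor is added;
  likewise for B with the v_q. Worker i gets these coefficients at z = \<alpha>_i. Since
  P(\<alpha>_i) is nonzero, they are an affine bijective image of the uniform random tensors,
  hence uniformly distributed whatever D is. The worker's result is a polynomial of degree
  at most 2R in z whose value at \<beta>_q is the q-th product of the bilinear algorithm applied to
  the blocks of A^(D) and B^(D); so any 2R + 1 results determine these R values by
  interpolation, and the w_q recombine them into the blocks of (A^(D))^T B^(D). The
  standard algorithm shows R \<le> mpn, so a field with N + mpn elements is large enough.
\<close>

section \<open>Block indices and finite sums\<close>

lemma block_index_less:
  fixes u z p s :: nat
  assumes "u < p" "z < s"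
  shows "u * s + z < p * s"
proof -
  have "u * s + z < Suc u * s" using assms(2) by simp
  also have "\<dots> \<le> p * s" using assms(1) by (intro mult_le_mono1) simp
  finally show ?thesis .
qed

lemma block_index_less_dividend:
  fixes u z p s :: nat
  assumes "u < p" "z < s div p"
  shows "u * (s div p) + z < s"
  using block_index_less[OF assms] times_div_less_eq_dividend[of p s] by linarith

lemma bij_betw_block_index:
  fixes p s :: nat
  shows "bij_betw (\<lambda>(u, z). u * s + z) ({..<p} \<times> {..<s}) {..<p * s}"
  by (rule bij_betw_byWitness[where f' = "\<lambda>i. (i div s, i mod s)"])
    (auto simp: block_index_less less_mult_imp_div_less intro!: mod_less_divisor Nat.gr0I)

lemma triple_index_decode:
  fixes a b c p n :: nat
  assumes "b < p" "c < n"
  shows "(a * (p * n) + (b * n + c)) div (p * n) = a"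
    and "(a * (p * n) + (b * n + c)) mod (p * n) div n = b"
    and "(a * (p * n) + (b * n + c)) mod n = c"
proof -
  have "b * n + c < p * n" using assms by (rule block_index_less)
  then show "(a * (p * n) + (b * n + c)) div (p * n) = a"
    and "(a * (p * n) + (b * n + c)) mod (p * n) div n = b"
    using assms by (simp_all add: mod_mult_self3)
  have "(a * (p * n) + (b * n + c)) mod n = (c + (a * p + b) * n) mod n"
    by (rule arg_cong[where f = "\<lambda>x. x mod n"]) (simp add: algebra_simps)
  then show "(a * (p * n) + (b * n + c)) mod n = c" using assms by simp
qed

lemma ex_inj_on_lessThan:
  assumes "finite A" "a \<in> A" "k \<le> card A"
  shows "\<exists>f :: nat \<Rightarrow> 'a. inj_on f {..<k} \<and> (\<forall>i. f i \<in> A)"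
proof -
  obtain e where e: "bij_betw e {0..<card A} A" using ex_bij_betw_nat_finite[OF assms(1)] by blast
  define f where "f i = (if i < card A then e i else a)" for i
  have "inj_on f {..<k}"
    using e assms(3) unfolding f_def bij_betw_def inj_on_def by auto
  moreover have "f i \<in> A" for i
    using e assms(2) unfolding f_def by (auto dest: bij_betwE)
  ultimately show ?thesis by blast
qed

context abelian_monoid
begin

lemma finsum_cartesian_product:
  assumes "finite A" "finite B" "\<And>a b. a \<in> A \<Longrightarrow> b \<in> B \<Longrightarrow> f (a, b) \<in> carrier G"
  shows "(\<Oplus>ab\<in>A \<times> B. f ab) = (\<Oplus>a\<in>A. \<Oplus>b\<in>B. f (a, b))"
proof -
  have "A \<times> B = (\<Union>a\<in>A. Pair a ` B)" by auto
  then have "(\<Oplus>ab\<in>A \<times> B. f ab) = (\<Oplus>a\<in>A. finsum G f (Pair a ` B))"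
    using assms by (auto intro!: add.finprod_UN_disjoint simp: pairwise_def disjnt_def)
  also have "\<dots> = (\<Oplus>a\<in>A. \<Oplus>b\<in>B. f (a, b))"
  proof (rule finsum_cong')
    fix a assume "a \<in> A"
    then show "finsum G f (Pair a ` B) = (\<Oplus>b\<in>B. f (a, b))"
      using assms by (subst finsum_reindex) (auto simp: inj_on_def)
  qed (use assms in \<open>auto intro!: finsum_closed\<close>)
  finally show ?thesis .
qed

lemma finsum_swap:
  assumes "finite A" "finite B" "\<And>a b. a \<in> A \<Longrightarrow> b \<in> B \<Longrightarrow> f a b \<in> carrier G"
  shows "(\<Oplus>a\<in>A. \<Oplus>b\<in>B. f a b) = (\<Oplus>b\<in>B. \<Oplus>a\<in>A. f a b)"
  using assms(1,3)
proof (induction A rule: finite_induct)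
  case empty
  then show ?case by (simp add: finsum_zero)
next
  case (insert x A)
  have "(\<Oplus>a\<in>insert x A. \<Oplus>b\<in>B. f a b) = (\<Oplus>b\<in>B. f x b) \<oplus> (\<Oplus>b\<in>B. \<Oplus>a\<in>A. f a b)"
    using insert by (auto intro!: finsum_closed)
  also have "\<dots> = (\<Oplus>b\<in>B. f x b \<oplus> (\<Oplus>a\<in>A. f a b))"
    using insert by (auto intro!: finsum_addf[symmetric] finsum_closed)
  also have "\<dots> = (\<Oplus>b\<in>B. \<Oplus>a\<in>insert x A. f a b)"
    using insert by (intro add.finprod_cong') (auto intro!: finsum_closed)
  finally show ?case .
qed

lemma finsum_product_swap:
  assumes "finite A" "finite B" "\<And>a b. a \<in> A \<Longrightarrow> b \<in> B \<Longrightarrow> f (a, b) \<in> carrier G"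
  shows "(\<Oplus>ab\<in>A \<times> B. f ab) = (\<Oplus>ba\<in>B \<times> A. f (snd ba, fst ba))"
  using assms by (simp add: finsum_cartesian_product finsum_swap[of A B "\<lambda>a b. f (a, b)"])

lemma finsum_eq_single:
  assumes "finite A" "a \<in> A" "f a \<in> carrier G" "\<And>x. x \<in> A \<Longrightarrow> x \<noteq> a \<Longrightarrow> f x = \<zero>"
  shows "finsum G f A = f a"
proof -
  have "f x \<in> carrier G" if "x \<in> A" for x
    using assms that by (cases "x = a") auto
  then have "finsum G f A = finsum G f {a}"
    by (intro add.finprod_mono_neutral_cong_right) (use assms in auto)
  then show ?thesis using assms(3) by simp
qed

lemma finsum_lessThan_mult:
  fixes p s :: nat
  assumes "\<And>i. i < p * s \<Longrightarrow> f i \<in> carrier G"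
  shows "(\<Oplus>i\<in>{..<p * s}. f i) = (\<Oplus>u\<in>{..<p}. \<Oplus>z\<in>{..<s}. f (u * s + z))"
proof -
  have "(\<Oplus>i\<in>{..<p * s}. f i) = (\<Oplus>uz\<in>{..<p} \<times> {..<s}. f (fst uz * s + snd uz))"
    using add.finprod_reindex[of f "\<lambda>(u, z). u * s + z" "{..<p} \<times> {..<s}"]
      bij_betw_block_index[of s p] assms
    by (auto simp: bij_betw_def case_prod_beta)
  also have "\<dots> = (\<Oplus>u\<in>{..<p}. \<Oplus>z\<in>{..<s}. f (u * s + z))"
    using finsum_cartesian_product[of "{..<p}" "{..<s}" "\<lambda>uz. f (fst uz * s + snd uz)"] assms
    by (simp add: block_index_less)
  finally show ?thesis .
qed

end

context cring
begin

lemma finsum_swap_scale: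
  assumes "finite A" "finite B" "\<And>a b. a \<in> A \<Longrightarrow> b \<in> B \<Longrightarrow> f a b \<in> carrier R"
    "\<And>b. b \<in> B \<Longrightarrow> c b \<in> carrier R"
  shows "(\<Oplus>a\<in>A. \<Oplus>b\<in>B. f a b \<otimes> c b) = (\<Oplus>b\<in>B. c b \<otimes> (\<Oplus>a\<in>A. f a b))"
proof -
  have "(\<Oplus>a\<in>A. \<Oplus>b\<in>B. f a b \<otimes> c b) = (\<Oplus>b\<in>B. \<Oplus>a\<in>A. f a b \<otimes> c b)"
    by (rule finsum_swap) (use assms in auto)
  also have "\<dots> = (\<Oplus>b\<in>B. c b \<otimes> (\<Oplus>a\<in>A. f a b))"
  proof (rule finsum_cong')
    fix b assume b: "b \<in> B"
    have "(\<Oplus>a\<in>A. f a b \<otimes> c b) = (\<Oplus>a\<in>A. f a b) \<otimes> c b"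
      by (rule finsum_ldistr[symmetric]) (use assms b in auto)
    then show "(\<Oplus>a\<in>A. f a b \<otimes> c b) = c b \<otimes> (\<Oplus>a\<in>A. f a b)"
      using assms b by (simp add: m_comm finsum_closed)
  qed (use assms in \<open>auto intro!: finsum_closed\<close>)
  finally show ?thesis .
qed

lemma finsum_weighted_swap:
  assumes "finite A" "finite S" "\<And>q. q \<in> A \<Longrightarrow> a q \<in> carrier R"
    "\<And>q i. q \<in> A \<Longrightarrow> i \<in> S \<Longrightarrow> b q i \<in> carrier R" "\<And>i. i \<in> S \<Longrightarrow> h i \<in> carrier R"
  shows "(\<Oplus>i\<in>S. (\<Oplus>q\<in>A. a q \<otimes> b q i) \<otimes> h i) = (\<Oplus>q\<in>A. a q \<otimes> (\<Oplus>i\<in>S. b q i \<otimes> h i))"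
proof -
  have "(\<Oplus>i\<in>S. (\<Oplus>q\<in>A. a q \<otimes> b q i) \<otimes> h i) = (\<Oplus>i\<in>S. \<Oplus>q\<in>A. (b q i \<otimes> h i) \<otimes> a q)"
  proof (rule finsum_cong')
    fix i assume i: "i \<in> S"
    have "(\<Oplus>q\<in>A. a q \<otimes> b q i) \<otimes> h i = (\<Oplus>q\<in>A. a q \<otimes> b q i \<otimes> h i)"
      by (rule finsum_ldistr) (use assms i in auto)
    also have "\<dots> = (\<Oplus>q\<in>A. (b q i \<otimes> h i) \<otimes> a q)"
      by (rule finsum_cong') (use assms i in \<open>auto simp: m_ac\<close>)
    finally show "(\<Oplus>q\<in>A. a q \<otimes> b q i) \<otimes> h i = (\<Oplus>q\<in>A. (b q i \<otimes> h i) \<otimes> a q)" .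
  qed (use assms in \<open>auto intro!: finsum_closed\<close>)
  also have "\<dots> = (\<Oplus>q\<in>A. a q \<otimes> (\<Oplus>i\<in>S. b q i \<otimes> h i))"
    by (rule finsum_swap_scale) (use assms in auto)
  finally show ?thesis .
qed

lemma finprod_eq_zero:
  assumes "finite I" "i \<in> I" "\<And>i. i \<in> I \<Longrightarrow> f i \<in> carrier R" "f i = \<zero>"
  shows "finprod R f I = \<zero>"
proof -
  have "I = insert i (I - {i})" using assms by auto
  then have "finprod R f I = f i \<otimes> finprod R f (I - {i})"
    using assms by (metis finprod_insert finite_Diff Diff_iff insertI1 Pi_I')
  then show ?thesis using assms by (auto intro!: finprod_closed)
qed

end

lemma (in domain) finprod_neq_zero:
  assumes "finite I" "\<And>i. i \<in> I \<Longrightarrow> f i \<in> carrier R" "\<And>i. i \<in> I \<Longrightarrow> f i \<noteq> \<zero>"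
  shows "finprod R f I \<noteq> \<zero>"
  using assms
proof (induction I rule: finite_induct)
  case (insert x I)
  then show ?case by (auto simp: integral_iff intro!: finprod_closed)
qed simp

section \<open>Polynomial functions and interpolation\<close>

lemma (in ring) minus_eq_zero_iff:
  assumes "a \<in> carrier R" "b \<in> carrier R"
  shows "a \<ominus> b = \<zero> \<longleftrightarrow> a = b"
proof
  assume "a \<ominus> b = \<zero>"
  moreover have "a = (a \<ominus> b) \<oplus> b" using assms by algebra
  ultimately show "a = b" using assms by simp
qed (use assms in \<open>simp add: minus_eq r_neg\<close>)

lemma (in field) finprod_sub_eq_zero_iff:
  assumes "finite S" "X ` S \<subseteq> carrier R" "z \<in> carrier R"
  shows "(\<Otimes>q\<in>S. z \<ominus> X q) = \<zero> \<longleftrightarrow> z \<in> X ` S"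
proof
  assume "z \<in> X ` S"
  then obtain q where "q \<in> S" "z = X q" by blast
  then show "(\<Otimes>q\<in>S. z \<ominus> X q) = \<zero>"
    using assms by (intro finprod_eq_zero[of S q]) (auto simp: minus_eq_zero_iff)
next
  assume zero: "(\<Otimes>q\<in>S. z \<ominus> X q) = \<zero>"
  show "z \<in> X ` S"
  proof (rule ccontr)
    assume "z \<notin> X ` S"
    then have "z \<ominus> X q \<noteq> \<zero>" if "q \<in> S" for q
      using assms that by (auto simp: minus_eq_zero_iff)
    then show False using finprod_neq_zero[of S "\<lambda>q. z \<ominus> X q"] zero assms by auto
  qed
qed

definition polyfun :: "('a, 'b) ring_scheme \<Rightarrow> nat \<Rightarrow> ('a \<Rightarrow> 'a) \<Rightarrow> bool" where
  "polyfun R d f \<longleftrightarrow> (\<exists>c. (\<forall>g. c g \<in> carrier R) \<and> (\<forall>g>d. c g = \<zero>\<^bsub>R\<^esub>) \<and>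
      (\<forall>x\<in>carrier R. f x = (\<Oplus>\<^bsub>R\<^esub>g\<in>{..d}. c g \<otimes>\<^bsub>R\<^esub> x [^]\<^bsub>R\<^esub> g)))"

context cring
begin

lemma polyfunI:
  assumes "\<And>g. c g \<in> carrier R" "\<And>g. d < g \<Longrightarrow> c g = \<zero>"
    "\<And>x. x \<in> carrier R \<Longrightarrow> f x = (\<Oplus>g\<in>{..d}. c g \<otimes> x [^] g)"
  shows "polyfun R d f"
  unfolding polyfun_def using assms by blast

lemma polyfunE:
  assumes "polyfun R d f"
  obtains c where "\<And>g. c g \<in> carrier R" "\<And>g. d < g \<Longrightarrow> c g = \<zero>"
    "\<And>x. x \<in> carrier R \<Longrightarrow> f x = (\<Oplus>g\<in>{..d}. c g \<otimes> x [^] g)"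
  using assms unfolding polyfun_def by blast

lemma polyfun_closed: "polyfun R d f \<Longrightarrow> x \<in> carrier R \<Longrightarrow> f x \<in> carrier R"
  by (erule polyfunE) (auto intro!: finsum_closed)

lemma polyfun_cong: "polyfun R d f \<Longrightarrow> (\<And>x. x \<in> carrier R \<Longrightarrow> f x = h x) \<Longrightarrow> polyfun R d h"
  unfolding polyfun_def by metis

lemma polyfun_mono:
  assumes "polyfun R d f" "d \<le> d'"
  shows "polyfun R d' f"
proof -
  obtain c where c: "\<And>g. c g \<in> carrier R" "\<And>g. d < g \<Longrightarrow> c g = \<zero>"
    "\<And>x. x \<in> carrier R \<Longrightarrow> f x = (\<Oplus>g\<in>{..d}. c g \<otimes> x [^] g)"
    using polyfunE[OF assms(1)] by blast
  show ?thesis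
  proof (rule polyfunI[of c])
    fix x assume x: "x \<in> carrier R"
    have "(\<Oplus>g\<in>{..d}. c g \<otimes> x [^] g) = (\<Oplus>g\<in>{..d'}. c g \<otimes> x [^] g)"
      by (rule add.finprod_mono_neutral_cong_left) (use c x assms(2) in auto)
    then show "f x = (\<Oplus>g\<in>{..d'}. c g \<otimes> x [^] g)" using c x by simp
  qed (use c assms(2) in auto)
qed

lemma polyfun_const:
  assumes "a \<in> carrier R"
  shows "polyfun R d (\<lambda>_. a)"
proof -
  have "polyfun R 0 (\<lambda>_. a)"
    by (rule polyfunI[of "\<lambda>g. if g = 0 then a else \<zero>"]) (use assms in auto)
  then show ?thesis by (rule polyfun_mono) simp
qed

lemma polyfun_add:
  assumes "polyfun R d f" "polyfun R d h"
  shows "polyfun R d (\<lambda>x. f x \<oplus> h x)"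
proof -
  obtain c where c: "\<And>g. c g \<in> carrier R" "\<And>g. d < g \<Longrightarrow> c g = \<zero>"
    "\<And>x. x \<in> carrier R \<Longrightarrow> f x = (\<Oplus>g\<in>{..d}. c g \<otimes> x [^] g)"
    using polyfunE[OF assms(1)] by blast
  obtain b where b: "\<And>g. b g \<in> carrier R" "\<And>g. d < g \<Longrightarrow> b g = \<zero>"
    "\<And>x. x \<in> carrier R \<Longrightarrow> h x = (\<Oplus>g\<in>{..d}. b g \<otimes> x [^] g)"
    using polyfunE[OF assms(2)] by blast
  show ?thesis
  proof (rule polyfunI[of "\<lambda>g. c g \<oplus> b g"])
    fix x assume x: "x \<in> carrier R"
    have "(\<Oplus>g\<in>{..d}. (c g \<oplus> b g) \<otimes> x [^] g) = (\<Oplus>g\<in>{..d}. c g \<otimes> x [^] g \<oplus> b g \<otimes> x [^] g)"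
      by (rule finsum_cong) (use b c x in \<open>auto simp: l_distr\<close>)
    also have "\<dots> = (\<Oplus>g\<in>{..d}. c g \<otimes> x [^] g) \<oplus> (\<Oplus>g\<in>{..d}. b g \<otimes> x [^] g)"
      by (rule finsum_addf) (use b c x in auto)
    finally show "f x \<oplus> h x = (\<Oplus>g\<in>{..d}. (c g \<oplus> b g) \<otimes> x [^] g)" using b c x by simp
  qed (use b c in auto)
qed

lemma polyfun_smult:
  assumes "polyfun R d f" "a \<in> carrier R"
  shows "polyfun R d (\<lambda>x. a \<otimes> f x)"
proof -
  obtain c where c: "\<And>g. c g \<in> carrier R" "\<And>g. d < g \<Longrightarrow> c g = \<zero>"
    "\<And>x. x \<in> carrier R \<Longrightarrow> f x = (\<Oplus>g\<in>{..d}. c g \<otimes> x [^] g)"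
    using polyfunE[OF assms(1)] by blast
  show ?thesis
  proof (rule polyfunI[of "\<lambda>g. a \<otimes> c g"])
    fix x assume x: "x \<in> carrier R"
    have "a \<otimes> (\<Oplus>g\<in>{..d}. c g \<otimes> x [^] g) = (\<Oplus>g\<in>{..d}. a \<otimes> (c g \<otimes> x [^] g))"
      by (rule finsum_rdistr) (use c x assms in auto)
    also have "\<dots> = (\<Oplus>g\<in>{..d}. a \<otimes> c g \<otimes> x [^] g)"
      by (rule finsum_cong) (use c x assms in \<open>auto simp: m_assoc\<close>)
    finally show "a \<otimes> f x = (\<Oplus>g\<in>{..d}. a \<otimes> c g \<otimes> x [^] g)" using c x by simp
  qed (use c assms in auto)
qed

lemma polyfun_mult_const:
  "polyfun R d f \<Longrightarrow> a \<in> carrier R \<Longrightarrow> polyfun R d (\<lambda>x. f x \<otimes> a)"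
  by (rule polyfun_cong[OF polyfun_smult[of d f a]]) (auto simp: m_comm polyfun_closed)

lemma polyfun_finsum:
  assumes "finite I" "\<And>i. i \<in> I \<Longrightarrow> polyfun R d (f i)"
  shows "polyfun R d (\<lambda>x. \<Oplus>i\<in>I. f i x)"
  using assms
proof (induction I rule: finite_induct)
  case empty
  then show ?case using polyfun_const[of \<zero> d] by simp
next
  case (insert y I)
  have "polyfun R d (\<lambda>x. f y x \<oplus> (\<Oplus>i\<in>I. f i x))"
    using insert by (auto intro!: polyfun_add)
  then show ?case
  proof (rule polyfun_cong)
    fix x assume "x \<in> carrier R"
    then show "f y x \<oplus> (\<Oplus>i\<in>I. f i x) = (\<Oplus>i\<in>insert y I. f i x)"
      using insert by (intro finsum_insert[symmetric]) (auto intro: polyfun_closed)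
  qed
qed

lemma polyfun_var_mult:
  assumes "polyfun R d f"
  shows "polyfun R (Suc d) (\<lambda>x. x \<otimes> f x)"
proof -
  obtain c where c: "\<And>g. c g \<in> carrier R" "\<And>g. d < g \<Longrightarrow> c g = \<zero>"
    "\<And>x. x \<in> carrier R \<Longrightarrow> f x = (\<Oplus>g\<in>{..d}. c g \<otimes> x [^] g)"
    using polyfunE[OF assms(1)] by blast
  let ?c = "\<lambda>g. case g of 0 \<Rightarrow> \<zero> | Suc h \<Rightarrow> c h"
  show ?thesis
  proof (rule polyfunI[of ?c])
    fix x assume x: "x \<in> carrier R"
    have "(\<Oplus>g\<in>{..Suc d}. ?c g \<otimes> x [^] g) = (\<Oplus>g\<in>{..d}. ?c (Suc g) \<otimes> x [^] Suc g) \<oplus> ?c 0 \<otimes> x [^] (0::nat)"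
      by (rule finsum_Suc2) (use c x in \<open>auto split: nat.split\<close>)
    also have "\<dots> = (\<Oplus>g\<in>{..d}. c g \<otimes> x [^] g \<otimes> x)"
      using c x by (auto simp: m_assoc intro!: finsum_closed)
    also have "\<dots> = (\<Oplus>g\<in>{..d}. c g \<otimes> x [^] g) \<otimes> x"
      by (rule finsum_ldistr[symmetric]) (use c x in auto)
    also have "\<dots> = x \<otimes> f x" using c x by (simp add: m_comm finsum_closed)
    finally show "x \<otimes> f x = (\<Oplus>g\<in>{..Suc d}. ?c g \<otimes> x [^] g)" by simp
  qed (use c in \<open>auto split: nat.split\<close>)
qed

lemma polyfun_pow_mult:
  assumes "polyfun R d f"
  shows "polyfun R (d + k) (\<lambda>x. x [^] k \<otimes> f x)"
proof (induction k)
  case 0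
  show ?case
    using polyfun_cong[OF assms, of "\<lambda>x. x [^] (0::nat) \<otimes> f x"] polyfun_closed[OF assms] by simp
next
  case (Suc k)
  have "polyfun R (d + Suc k) (\<lambda>x. x \<otimes> (x [^] k \<otimes> f x))"
    using polyfun_var_mult[OF Suc] by simp
  then show ?case
    by (rule polyfun_cong) (simp add: m_lcomm polyfun_closed[OF assms] m_assoc)
qed

lemma polyfun_mult:
  assumes "polyfun R d1 f" "polyfun R d2 h"
  shows "polyfun R (d1 + d2) (\<lambda>x. f x \<otimes> h x)"
proof -
  obtain b where b: "\<And>g. b g \<in> carrier R" "\<And>g. d2 < g \<Longrightarrow> b g = \<zero>"
    "\<And>x. x \<in> carrier R \<Longrightarrow> h x = (\<Oplus>g\<in>{..d2}. b g \<otimes> x [^] g)"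
    using polyfunE[OF assms(2)] by blast
  have "polyfun R (d1 + d2) (\<lambda>x. \<Oplus>g\<in>{..d2}. b g \<otimes> (x [^] g \<otimes> f x))"
  proof (rule polyfun_finsum)
    fix g assume "g \<in> {..d2}"
    then have "polyfun R (d1 + d2) (\<lambda>x. x [^] g \<otimes> f x)"
      using polyfun_mono[OF polyfun_pow_mult[OF assms(1), of g]] by simp
    then show "polyfun R (d1 + d2) (\<lambda>x. b g \<otimes> (x [^] g \<otimes> f x))"
      using b by (intro polyfun_smult) auto
  qed simp
  then show ?thesis
  proof (rule polyfun_cong)
    fix x assume x: "x \<in> carrier R"
    have fx: "f x \<in> carrier R" using x assms(1) polyfun_closed by blast
    have "f x \<otimes> h x = f x \<otimes> (\<Oplus>g\<in>{..d2}. b g \<otimes> x [^] g)" using b x by simp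
    also have "\<dots> = (\<Oplus>g\<in>{..d2}. f x \<otimes> (b g \<otimes> x [^] g))"
      by (rule finsum_rdistr) (use b x fx in auto)
    also have "\<dots> = (\<Oplus>g\<in>{..d2}. b g \<otimes> (x [^] g \<otimes> f x))"
      by (rule finsum_cong) (use b x fx in \<open>auto simp: m_ac\<close>)
    finally show "(\<Oplus>g\<in>{..d2}. b g \<otimes> (x [^] g \<otimes> f x)) = f x \<otimes> h x" by simp
  qed
qed

lemma polyfun_finprod_linear:
  assumes "finite I" "\<And>i. i \<in> I \<Longrightarrow> a i \<in> carrier R"
  shows "polyfun R (card I) (\<lambda>x. \<Otimes>i\<in>I. x \<ominus> a i)"
  using assms
proof (induction I rule: finite_induct)
  case empty
  then show ?case using polyfun_const[of \<one> 0] by simp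
next
  case (insert y I)
  have ay: "a y \<in> carrier R" using insert.prems by simp
  have "polyfun R (Suc 0) (\<lambda>x. x \<otimes> \<one> \<oplus> \<ominus> a y)"
    using ay by (intro polyfun_add polyfun_var_mult polyfun_const) auto
  then have "polyfun R (Suc 0) (\<lambda>x. x \<ominus> a y)"
    by (rule polyfun_cong) (use ay in \<open>simp add: minus_eq\<close>)
  then have "polyfun R (Suc 0 + card I) (\<lambda>x. (x \<ominus> a y) \<otimes> (\<Otimes>i\<in>I. x \<ominus> a i))"
    using insert by (intro polyfun_mult) auto
  moreover have "card (insert y I) = Suc 0 + card I" using insert by simp
  ultimately show ?case
  proof (intro polyfun_cong[where h = "\<lambda>x. \<Otimes>i\<in>insert y I. x \<ominus> a i"], simp)
    fix x assume "x \<in> carrier R"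
    then show "(x \<ominus> a y) \<otimes> (\<Otimes>i\<in>I. x \<ominus> a i) = (\<Otimes>i\<in>insert y I. x \<ominus> a i)"
      using insert by (intro finprod_insert[symmetric]) auto
  qed
qed

end

context cring
begin

lemma polyfun_weighted_eval:
  assumes "polyfun R d f" "finite S" "\<And>i. i \<in> S \<Longrightarrow> \<gamma> i \<in> carrier R"
    "\<And>i. i \<in> S \<Longrightarrow> X i \<in> carrier R" "\<beta> \<in> carrier R"
    "\<And>g. g \<le> d \<Longrightarrow> (\<Oplus>i\<in>S. \<gamma> i \<otimes> X i [^] g) = \<beta> [^] g"
  shows "(\<Oplus>i\<in>S. \<gamma> i \<otimes> f (X i)) = f \<beta>"
proof -
  obtain c where c: "\<And>g. c g \<in> carrier R" "\<And>g. d < g \<Longrightarrow> c g = \<zero>"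
    "\<And>x. x \<in> carrier R \<Longrightarrow> f x = (\<Oplus>g\<in>{..d}. c g \<otimes> x [^] g)"
    using polyfunE[OF assms(1)] by blast
  have "(\<Oplus>i\<in>S. \<gamma> i \<otimes> f (X i)) = (\<Oplus>i\<in>S. \<Oplus>g\<in>{..d}. (\<gamma> i \<otimes> X i [^] g) \<otimes> c g)"
  proof (rule finsum_cong')
    fix i assume i: "i \<in> S"
    have "\<gamma> i \<otimes> f (X i) = \<gamma> i \<otimes> (\<Oplus>g\<in>{..d}. c g \<otimes> X i [^] g)" using c(3) assms(4) i by simp
    also have "\<dots> = (\<Oplus>g\<in>{..d}. \<gamma> i \<otimes> (c g \<otimes> X i [^] g))"
      by (rule finsum_rdistr) (use assms(3,4) c(1) i in auto)
    also have "\<dots> = (\<Oplus>g\<in>{..d}. (\<gamma> i \<otimes> X i [^] g) \<otimes> c g)"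
      by (rule finsum_cong') (use assms(3,4) c(1) i in \<open>auto simp: m_ac\<close>)
    finally show "\<gamma> i \<otimes> f (X i) = (\<Oplus>g\<in>{..d}. (\<gamma> i \<otimes> X i [^] g) \<otimes> c g)" .
  qed (use assms(3,4) c(1) in \<open>auto intro!: finsum_closed\<close>)
  also have "\<dots> = (\<Oplus>g\<in>{..d}. c g \<otimes> (\<Oplus>i\<in>S. \<gamma> i \<otimes> X i [^] g))"
    by (rule finsum_swap_scale) (use assms(2-4) c(1) in auto)
  also have "\<dots> = (\<Oplus>g\<in>{..d}. c g \<otimes> \<beta> [^] g)"
    by (rule finsum_cong') (use assms(5,6) c(1) in auto)
  also have "\<dots> = f \<beta>" using c(3)[OF assms(5)] by simp
  finally show ?thesis .
qed

lemma power_weights_step: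
  assumes "finite S" "\<And>i. i \<in> S \<Longrightarrow> X i \<in> carrier R" "a \<in> carrier R" "\<beta> \<in> carrier R"
    "\<And>i. i \<in> S \<Longrightarrow> \<gamma> i \<in> carrier R" "\<And>i. i \<in> S \<Longrightarrow> \<delta> i \<in> carrier R"
    "\<And>i. i \<in> S \<Longrightarrow> \<delta> i \<otimes> (X i \<ominus> a) = (\<beta> \<ominus> a) \<otimes> \<gamma> i"
    "(\<Oplus>i\<in>S. \<gamma> i \<otimes> X i [^] g) = \<beta> [^] g"
  shows "(\<Oplus>i\<in>S. \<delta> i \<otimes> X i [^] Suc g) = (\<beta> \<ominus> a) \<otimes> \<beta> [^] g \<oplus> a \<otimes> (\<Oplus>i\<in>S. \<delta> i \<otimes> X i [^] g)"
proof -
  have split: "\<delta> i \<otimes> X i [^] Suc g = (\<beta> \<ominus> a) \<otimes> (\<gamma> i \<otimes> X i [^] g) \<oplus> a \<otimes> (\<delta> i \<otimes> X i [^] g)"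
    if i: "i \<in> S" for i
  proof -
    have Xi: "X i \<in> carrier R" "X i [^] g \<in> carrier R" and \<delta>i: "\<delta> i \<in> carrier R"
      using assms(2,6) i by auto
    have "\<delta> i \<otimes> X i [^] Suc g = \<delta> i \<otimes> (X i [^] g \<otimes> X i)" by simp
    also have "\<dots> = (\<delta> i \<otimes> (X i \<ominus> a)) \<otimes> X i [^] g \<oplus> a \<otimes> (\<delta> i \<otimes> X i [^] g)"
      using Xi \<delta>i assms(3) by algebra
    also have "\<dots> = (\<beta> \<ominus> a) \<otimes> (\<gamma> i \<otimes> X i [^] g) \<oplus> a \<otimes> (\<delta> i \<otimes> X i [^] g)"
      using assms(3-5,7) i Xi by (simp add: m_assoc)
    finally show ?thesis .
  qed
  have "(\<Oplus>i\<in>S. \<delta> i \<otimes> X i [^] Suc g) =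
      (\<Oplus>i\<in>S. (\<beta> \<ominus> a) \<otimes> (\<gamma> i \<otimes> X i [^] g) \<oplus> a \<otimes> (\<delta> i \<otimes> X i [^] g))"
    by (rule finsum_cong') (use split assms in auto)
  also have "\<dots> = (\<Oplus>i\<in>S. (\<beta> \<ominus> a) \<otimes> (\<gamma> i \<otimes> X i [^] g)) \<oplus> (\<Oplus>i\<in>S. a \<otimes> (\<delta> i \<otimes> X i [^] g))"
    by (rule finsum_addf) (use assms in auto)
  also have "(\<Oplus>i\<in>S. (\<beta> \<ominus> a) \<otimes> (\<gamma> i \<otimes> X i [^] g)) = (\<beta> \<ominus> a) \<otimes> (\<Oplus>i\<in>S. \<gamma> i \<otimes> X i [^] g)"
    by (rule finsum_rdistr[symmetric]) (use assms in auto)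
  also have "(\<Oplus>i\<in>S. a \<otimes> (\<delta> i \<otimes> X i [^] g)) = a \<otimes> (\<Oplus>i\<in>S. \<delta> i \<otimes> X i [^] g)"
    by (rule finsum_rdistr[symmetric]) (use assms in auto)
  finally show ?thesis using assms(8) by simp
qed

lemma power_weights_extend:
  assumes "finite S" "\<And>i. i \<in> S \<Longrightarrow> X i \<in> carrier R" "\<And>i. i \<in> S \<Longrightarrow> \<delta> i \<in> carrier R"
    "a \<in> carrier R" "\<beta> \<in> carrier R" "c \<in> carrier R" "c \<oplus> (\<Oplus>i\<in>S. \<delta> i) = \<one>"
    "\<And>g. g < k \<Longrightarrow>
      (\<Oplus>i\<in>S. \<delta> i \<otimes> X i [^] Suc g) = (\<beta> \<ominus> a) \<otimes> \<beta> [^] g \<oplus> a \<otimes> (\<Oplus>i\<in>S. \<delta> i \<otimes> X i [^] g)"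
    "g \<le> k"
  shows "c \<otimes> a [^] g \<oplus> (\<Oplus>i\<in>S. \<delta> i \<otimes> X i [^] g) = \<beta> [^] g"
  using assms(9)
proof (induction g)
  case 0
  have "(\<Oplus>i\<in>S. \<delta> i \<otimes> X i [^] (0::nat)) = (\<Oplus>i\<in>S. \<delta> i)"
    by (rule finsum_cong') (use assms(3) in auto)
  then show ?case using assms(6,7) by simp
next
  case (Suc g)
  define T where "T h = (\<Oplus>i\<in>S. \<delta> i \<otimes> X i [^] h)" for h :: nat
  have closed: "T g \<in> carrier R" "a [^] g \<in> carrier R" "\<beta> [^] g \<in> carrier R"
    unfolding T_def using assms(2-5) by (auto intro!: finsum_closed)
  have "c \<otimes> a [^] Suc g \<oplus> T (Suc g) = c \<otimes> (a [^] g \<otimes> a) \<oplus> ((\<beta> \<ominus> a) \<otimes> \<beta> [^] g \<oplus> a \<otimes> T g)"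
    unfolding T_def using assms(8) Suc.prems by simp
  also have "\<dots> = a \<otimes> (c \<otimes> a [^] g \<oplus> T g) \<oplus> (\<beta> \<ominus> a) \<otimes> \<beta> [^] g"
    using closed assms(4-6) by algebra
  also have "\<dots> = a \<otimes> \<beta> [^] g \<oplus> (\<beta> \<ominus> a) \<otimes> \<beta> [^] g"
    using Suc unfolding T_def by simp
  also have "\<dots> = \<beta> [^] g \<otimes> \<beta>"
    using closed assms(4,5) by algebra
  finally show ?case unfolding T_def by simp
qed

end

context field
begin

lemma power_weights_exist:
  assumes "finite S" "inj_on X S" "X ` S \<subseteq> carrier R" "\<beta> \<in> carrier R"
  shows "\<exists>\<gamma>. (\<forall>i\<in>S. \<gamma> i \<in> carrier R) \<and> (\<forall>g<card S. (\<Oplus>i\<in>S. \<gamma> i \<otimes> X i [^] g) = \<beta> [^] g)"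
  using assms(1-3)
proof (induction S rule: finite_induct)
  case empty
  then show ?case by simp
next
  case (insert a S)
  have XS: "\<And>i. i \<in> S \<Longrightarrow> X i \<in> carrier R" and Xa: "X a \<in> carrier R"
    using insert.prems by auto
  obtain \<gamma> where \<gamma>: "\<And>i. i \<in> S \<Longrightarrow> \<gamma> i \<in> carrier R"
    "\<And>g. g < card S \<Longrightarrow> (\<Oplus>i\<in>S. \<gamma> i \<otimes> X i [^] g) = \<beta> [^] g"
    using insert.IH insert.prems by (auto simp: inj_on_insert)
  have unit: "X i \<ominus> X a \<in> Units R" if i: "i \<in> S" for i
  proof -
    have "X a \<notin> X ` S" using insert.prems(1) insert.hyps(2) by (simp add: inj_on_insert)
    then have "X i \<noteq> X a" using i by (metis image_eqI)
    then show ?thesis using XS[OF i] Xa by (simp add: field_Units minus_eq_zero_iff)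
  qed
  txt \<open>The new weights satisfy \<delta> i (X i - X a) = (\<beta> - X a) \<gamma> i, which turns the power sums
    of degree g into those of degree g + 1 (power_weights_step); the weight of a makes the
    degree-0 sum equal to 1.\<close>
  define \<delta> where "\<delta> i = (\<beta> \<ominus> X a) \<otimes> \<gamma> i \<otimes> inv (X i \<ominus> X a)" for i
  have \<delta>_closed: "\<delta> i \<in> carrier R" if "i \<in> S" for i
    unfolding \<delta>_def using that \<gamma>(1) unit Xa assms(4) by (auto intro!: Units_inv_closed)
  have \<delta>_eq: "\<delta> i \<otimes> (X i \<ominus> X a) = (\<beta> \<ominus> X a) \<otimes> \<gamma> i" if "i \<in> S" for i
    unfolding \<delta>_def using that \<gamma>(1) unit Xa assms(4)
    by (simp add: m_assoc Units_closed Units_inv_closed)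
  define c where "c = \<one> \<ominus> (\<Oplus>i\<in>S. \<delta> i)"
  have "(\<Oplus>i\<in>S. \<delta> i) \<in> carrier R" using \<delta>_closed by (auto intro!: finsum_closed)
  then have c_closed: "c \<in> carrier R" and "c \<oplus> (\<Oplus>i\<in>S. \<delta> i) = \<one>"
    unfolding c_def by (simp, algebra)
  then have "c \<otimes> X a [^] g \<oplus> (\<Oplus>i\<in>S. \<delta> i \<otimes> X i [^] g) = \<beta> [^] g" if "g \<le> card S" for g
    using that insert.hyps XS Xa assms(4) \<gamma> \<delta>_closed \<delta>_eq
    by (intro power_weights_extend[where k = "card S"] power_weights_step) auto
  moreover have "(\<Oplus>i\<in>insert a S. (\<delta>(a := c)) i \<otimes> X i [^] g) =
      c \<otimes> X a [^] g \<oplus> (\<Oplus>i\<in>S. \<delta> i \<otimes> X i [^] g)" for g :: nat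
    using insert.hyps XS Xa \<delta>_closed c_closed by (subst finsum_insert) (auto intro!: finsum_cong')
  ultimately show ?case
    using insert.hyps \<delta>_closed c_closed by (intro exI[of _ "\<delta>(a := c)"]) auto
qed

lemma polyfun_interpolation:
  assumes "finite S" "inj_on X S" "X ` S \<subseteq> carrier R" "\<beta> \<in> carrier R"
  shows "\<exists>\<gamma>. (\<forall>i\<in>S. \<gamma> i \<in> carrier R) \<and>
    (\<forall>d f. polyfun R d f \<longrightarrow> d < card S \<longrightarrow> (\<Oplus>i\<in>S. \<gamma> i \<otimes> f (X i)) = f \<beta>)"
proof -
  obtain \<gamma> where \<gamma>: "\<forall>i\<in>S. \<gamma> i \<in> carrier R" "\<forall>g<card S. (\<Oplus>i\<in>S. \<gamma> i \<otimes> X i [^] g) = \<beta> [^] g"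
    using power_weights_exist[OF assms] by blast
  show ?thesis
  proof (intro exI[of _ \<gamma>] conjI allI impI)
    fix d f assume "polyfun R d f" "d < card S"
    then show "(\<Oplus>i\<in>S. \<gamma> i \<otimes> f (X i)) = f \<beta>"
      by (intro polyfun_weighted_eval[of d f S \<gamma> X \<beta>]) (use \<gamma> assms in auto)
  qed (use \<gamma> in simp)
qed

end

definition lagrange_basis :: "('a, 'b) ring_scheme \<Rightarrow> ('c \<Rightarrow> 'a) \<Rightarrow> 'c set \<Rightarrow> 'c \<Rightarrow> 'a \<Rightarrow> 'a" where
  "lagrange_basis R X S q z =
     inv\<^bsub>R\<^esub> (\<Otimes>\<^bsub>R\<^esub>q'\<in>S - {q}. X q \<ominus>\<^bsub>R\<^esub> X q') \<otimes>\<^bsub>R\<^esub> (\<Otimes>\<^bsub>R\<^esub>q'\<in>S - {q}. z \<ominus>\<^bsub>R\<^esub> X q')"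

context field
begin

lemma lagrange_denominator_unit:
  assumes "finite S" "inj_on X S" "X ` S \<subseteq> carrier R" "q \<in> S"
  shows "(\<Otimes>q'\<in>S - {q}. X q \<ominus> X q') \<in> Units R"
proof -
  have "X q \<notin> X ` (S - {q})" using assms(2,4) by (auto dest: inj_onD)
  then have "(\<Otimes>q'\<in>S - {q}. X q \<ominus> X q') \<noteq> \<zero>"
    using assms by (subst finprod_sub_eq_zero_iff) auto
  then show ?thesis using assms by (auto simp: field_Units intro!: finprod_closed)
qed

lemma lagrange_basis_closed:
  assumes "finite S" "inj_on X S" "X ` S \<subseteq> carrier R" "q \<in> S" "z \<in> carrier R"
  shows "lagrange_basis R X S q z \<in> carrier R"
  unfolding lagrange_basis_def using lagrange_denominator_unit[OF assms(1-4)] assms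
  by (auto intro!: finprod_closed Units_inv_closed)

lemma lagrange_basis_node:
  assumes "finite S" "inj_on X S" "X ` S \<subseteq> carrier R" "q \<in> S" "q' \<in> S"
  shows "lagrange_basis R X S q (X q') = (if q' = q then \<one> else \<zero>)"
proof (cases "q' = q")
  case True
  then show ?thesis
    using lagrange_denominator_unit[OF assms(1-4)] by (simp add: lagrange_basis_def)
next
  case False
  then have "(\<Otimes>q''\<in>S - {q}. X q' \<ominus> X q'') = \<zero>"
    using assms by (subst finprod_sub_eq_zero_iff) auto
  then show ?thesis
    using False lagrange_denominator_unit[OF assms(1-4)] by (simp add: lagrange_basis_def Units_inv_closed)
qed

lemma polyfun_lagrange_basis:
  assumes "finite S" "inj_on X S" "X ` S \<subseteq> carrier R" "q \<in> S"
  shows "polyfun R (card S) (lagrange_basis R X S q)"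
proof -
  have "polyfun R (card (S - {q})) (\<lambda>z. \<Otimes>q'\<in>S - {q}. z \<ominus> X q')"
    by (rule polyfun_finprod_linear) (use assms in auto)
  then have "polyfun R (card S) (\<lambda>z. \<Otimes>q'\<in>S - {q}. z \<ominus> X q')"
    by (rule polyfun_mono) (simp add: card_Diff1_le assms(1))
  then have "polyfun R (card S) (\<lambda>z. inv (\<Otimes>q'\<in>S - {q}. X q \<ominus> X q') \<otimes> (\<Otimes>q'\<in>S - {q}. z \<ominus> X q'))"
    using lagrange_denominator_unit[OF assms] by (intro polyfun_smult) auto
  then show ?thesis by (rule polyfun_cong) (simp add: lagrange_basis_def)
qed

end

section \<open>Uniformly random masks\<close>

text \<open>Masks vanish outside P, so that they form a finite set carrying the uniform distribution.\<close>

definition masks :: "('a, 'b) ring_scheme \<Rightarrow> (nat \<Rightarrow> nat \<Rightarrow> nat \<Rightarrow> bool) \<Rightarrow> (nat \<Rightarrow> nat \<Rightarrow> nat \<Rightarrow> 'a) set" where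
  "masks R P = {f. (\<forall>l u j. P l u j \<longrightarrow> f l u j \<in> carrier R) \<and> (\<forall>l u j. \<not> P l u j \<longrightarrow> f l u j = \<zero>\<^bsub>R\<^esub>)}"

definition affine_mask :: "('a, 'b) ring_scheme \<Rightarrow> (nat \<Rightarrow> nat \<Rightarrow> nat \<Rightarrow> bool) \<Rightarrow>
    (nat \<Rightarrow> nat \<Rightarrow> nat \<Rightarrow> 'a) \<Rightarrow> 'a \<Rightarrow> (nat \<Rightarrow> nat \<Rightarrow> nat \<Rightarrow> 'a) \<Rightarrow> (nat \<Rightarrow> nat \<Rightarrow> nat \<Rightarrow> 'a)" where
  "affine_mask R P c t f = (\<lambda>l u j. if P l u j then c l u j \<oplus>\<^bsub>R\<^esub> t \<otimes>\<^bsub>R\<^esub> f l u j else \<zero>\<^bsub>R\<^esub>)"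

lemma masks_closed: "f \<in> masks R P \<Longrightarrow> P l u j \<Longrightarrow> f l u j \<in> carrier R"
  unfolding masks_def by blast

lemma masks_zero: "f \<in> masks R P \<Longrightarrow> \<not> P l u j \<Longrightarrow> f l u j = \<zero>\<^bsub>R\<^esub>"
  unfolding masks_def by blast

lemma finite_masks:
  assumes "finite (carrier R)" "finite {(l, u, j). P l u j}"
  shows "finite (masks R P)"
proof (rule inj_on_finite)
  let ?D = "{(l, u, j). P l u j}"
  show "inj_on (\<lambda>f. restrict (\<lambda>(l, u, j). f l u j) ?D) (masks R P)"
  proof (rule inj_onI, intro ext)
    fix f g l u j
    assume f: "f \<in> masks R P" and g: "g \<in> masks R P"
      and eq: "restrict (\<lambda>(l, u, j). f l u j) ?D = restrict (\<lambda>(l, u, j). g l u j) ?D"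
    show "f l u j = g l u j"
    proof (cases "P l u j")
      case True
      then show ?thesis using fun_cong[OF eq, of "(l, u, j)"] by simp
    next
      case False
      then show ?thesis using masks_zero[OF f] masks_zero[OF g] by simp
    qed
  qed
  show "(\<lambda>f. restrict (\<lambda>(l, u, j). f l u j) ?D) ` masks R P \<subseteq> ?D \<rightarrow>\<^sub>E carrier R"
    by (rule image_subsetI) (auto simp: restrict_PiE_iff masks_closed)
  show "finite (?D \<rightarrow>\<^sub>E carrier R)"
    using assms by (intro finite_PiE) auto
qed

context ring
begin

lemma zero_in_masks: "(\<lambda>_ _ _. \<zero>) \<in> masks R P"
  unfolding masks_def by simp

lemma masks_nonempty: "masks R P \<noteq> {}"
  using zero_in_masks by blast

lemma affine_mask_in_masks:
  assumes "\<And>l u j. P l u j \<Longrightarrow> c l u j \<in> carrier R" "t \<in> carrier R" "f \<in> masks R P"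
  shows "affine_mask R P c t f \<in> masks R P"
  using assms masks_closed[OF assms(3)] unfolding masks_def affine_mask_def by simp

end

lemma (in field) bij_betw_affine_mask:
  assumes "\<And>l u j. P l u j \<Longrightarrow> c l u j \<in> carrier R" "t \<in> carrier R" "t \<noteq> \<zero>"
  shows "bij_betw (affine_mask R P c t) (masks R P) (masks R P)"
proof -
  have t: "t \<in> Units R" using assms(2,3) by (simp add: field_Units)
  then have inv_t: "inv t \<in> carrier R" by simp
  let ?c' = "\<lambda>l u j. \<ominus> (inv t \<otimes> c l u j)"
  have c': "P l u j \<Longrightarrow> ?c' l u j \<in> carrier R" for l u j
    using assms(1) t by (auto intro!: Units_inv_closed)
  show ?thesis
  proof (rule bij_betw_byWitness[where f' = "affine_mask R P ?c' (inv t)"])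
    have "?c' l u j \<oplus> inv t \<otimes> (c l u j \<oplus> t \<otimes> f l u j) = f l u j"
      if "f \<in> masks R P" "P l u j" for f l u j
    proof -
      have "?c' l u j \<oplus> inv t \<otimes> (c l u j \<oplus> t \<otimes> f l u j) =
          (inv t \<otimes> t) \<otimes> f l u j"
        using inv_t assms(1,2) that masks_closed[OF that] by algebra
      then show ?thesis using t masks_closed[OF that] by simp
    qed
    then show "\<forall>f\<in>masks R P. affine_mask R P ?c' (inv t) (affine_mask R P c t f) = f"
      by (auto simp: affine_mask_def fun_eq_iff masks_zero)
    have "c l u j \<oplus> t \<otimes> (?c' l u j \<oplus> inv t \<otimes> f l u j) = f l u j"
      if "f \<in> masks R P" "P l u j" for f l u j
    proof -
      have "c l u j \<oplus> t \<otimes> (?c' l u j \<oplus> inv t \<otimes> f l u j) =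
          c l u j \<ominus> (t \<otimes> inv t) \<otimes> c l u j \<oplus> (t \<otimes> inv t) \<otimes> f l u j"
        using inv_t assms(1,2) that masks_closed[OF that] by algebra
      then show ?thesis using t assms(1) that masks_closed[OF that] by (simp add: minus_eq r_neg)
    qed
    then show "\<forall>f\<in>masks R P. affine_mask R P c t (affine_mask R P ?c' (inv t) f) = f"
      by (auto simp: affine_mask_def fun_eq_iff masks_zero)
    show "affine_mask R P c t ` masks R P \<subseteq> masks R P"
      using assms by (auto intro!: affine_mask_in_masks)
    show "affine_mask R P ?c' (inv t) ` masks R P \<subseteq> masks R P"
      using c' inv_t by (auto intro!: affine_mask_in_masks)
  qed
qed

section \<open>Bilinear algorithms\<close>

lemma bilinear_alg_standard:
  fixes F :: "'a ring" (structure)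
  assumes "ring F"
  shows "bilinear_alg F p m n (m * (p * n))"
proof -
  interpret ring F by (fact assms)
  define u where "u q a b = (if a = q div (p * n) \<and> b = q mod (p * n) div n then \<one> else \<zero>)" for q a b
  define v where "v q b c = (if b = q mod (p * n) div n \<and> c = q mod n then \<one> else \<zero>)" for q b c
  define w where "w q a c = (if a = q div (p * n) \<and> c = q mod n then \<one> else \<zero>)" for q a c
  have select: "(\<Oplus>ab\<in>{..<k1} \<times> {..<k2}. (if fst ab = a0 \<and> snd ab = b0 then \<one> else \<zero>) \<otimes> Z (fst ab) (snd ab))
      = Z a0 b0" if "a0 < k1" "b0 < k2" "mat_in F k1 k2 Z" for k1 k2 a0 b0 Z
    by (subst finsum_eq_single[of _ "(a0, b0)"]) (use that in \<open>auto simp: mat_in_def\<close>)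
  have "(\<Oplus>b\<in>{..<p}. X a b \<otimes> Y b c) =
      (\<Oplus>q\<in>{..<m * (p * n)}. (\<Oplus>ab\<in>{..<m} \<times> {..<p}. u q (fst ab) (snd ab) \<otimes> X (fst ab) (snd ab)) \<otimes>
         (\<Oplus>bc\<in>{..<p} \<times> {..<n}. v q (fst bc) (snd bc) \<otimes> Y (fst bc) (snd bc)) \<otimes> w q a c)"
    if X: "mat_in F m p X" and Y: "mat_in F p n Y" and a: "a < m" and c: "c < n" for X Y a c
  proof -
    define f where "f q = (\<Oplus>ab\<in>{..<m} \<times> {..<p}. u q (fst ab) (snd ab) \<otimes> X (fst ab) (snd ab)) \<otimes>
       (\<Oplus>bc\<in>{..<p} \<times> {..<n}. v q (fst bc) (snd bc) \<otimes> Y (fst bc) (snd bc)) \<otimes> w q a c" for q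
    have f_closed: "f q \<in> carrier F" for q
      unfolding f_def using X Y
      by (intro m_closed finsum_closed funcsetI) (auto simp: u_def v_def w_def mat_in_def)
    have f_index: "f (a0 * (p * n) + (b0 * n + c0)) = (if a0 = a \<and> c0 = c then X a b0 \<otimes> Y b0 c else \<zero>)"
      if "a0 < m" "b0 < p" "c0 < n" for a0 b0 c0
      using triple_index_decode[OF that(2,3)] select[of a0 m b0 p X] select[of b0 p c0 n Y] X Y that
      by (auto simp: f_def u_def v_def w_def mat_in_def)
    have "(\<Oplus>q\<in>{..<m * (p * n)}. f q) = (\<Oplus>a0\<in>{..<m}. \<Oplus>b0\<in>{..<p}. \<Oplus>c0\<in>{..<n}. f (a0 * (p * n) + (b0 * n + c0)))"
      using f_closed by (simp add: finsum_lessThan_mult)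
    also have "\<dots> = (\<Oplus>b0\<in>{..<p}. \<Oplus>c0\<in>{..<n}. f (a * (p * n) + (b0 * n + c0)))"
      by (rule finsum_eq_single) (use a f_index f_closed in \<open>auto intro!: finsum_closed add.finprod_one_eqI\<close>)
    also have "\<dots> = (\<Oplus>b0\<in>{..<p}. f (a * (p * n) + (b0 * n + c)))"
      by (intro finsum_cong' refl finsum_eq_single) (use a c f_index f_closed X Y in \<open>auto simp: mat_in_def\<close>)
    also have "\<dots> = (\<Oplus>b0\<in>{..<p}. X a b0 \<otimes> Y b0 c)"
      by (intro finsum_cong' refl) (use a c f_index X Y in \<open>auto simp: mat_in_def\<close>)
    finally show ?thesis unfolding f_def by simp
  qed
  then show ?thesis
    unfolding bilinear_alg_def by (intro exI[of _ u] exI[of _ v] exI[of _ w]) (auto simp: u_def v_def w_def)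
qed

lemma bilinear_complexity_attained:
  assumes "ring F"
  shows "bilinear_alg F p m n (bilinear_complexity F p m n)"
    and "bilinear_complexity F p m n \<le> m * (p * n)"
  using bilinear_alg_standard[OF assms] unfolding bilinear_complexity_def
  by (auto intro: LeastI Least_le)

definition is_bilinear_alg :: "'a ring \<Rightarrow> nat \<Rightarrow> nat \<Rightarrow> nat \<Rightarrow> nat \<Rightarrow>
    (nat \<Rightarrow> nat \<Rightarrow> nat \<Rightarrow> 'a) \<Rightarrow> (nat \<Rightarrow> nat \<Rightarrow> nat \<Rightarrow> 'a) \<Rightarrow> (nat \<Rightarrow> nat \<Rightarrow> nat \<Rightarrow> 'a) \<Rightarrow> bool" where
  "is_bilinear_alg F p m n r u v w \<longleftrightarrow>
     (\<forall>q<r. \<forall>a<m. \<forall>b<p. u q a b \<in> carrier F) \<and>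
     (\<forall>q<r. \<forall>b<p. \<forall>c<n. v q b c \<in> carrier F) \<and>
     (\<forall>q<r. \<forall>a<m. \<forall>c<n. w q a c \<in> carrier F) \<and>
     (\<forall>X Y. mat_in F m p X \<longrightarrow> mat_in F p n Y \<longrightarrow>
        (\<forall>a<m. \<forall>c<n.
           (\<Oplus>\<^bsub>F\<^esub>b\<in>{..<p}. X a b \<otimes>\<^bsub>F\<^esub> Y b c) =
           (\<Oplus>\<^bsub>F\<^esub>q\<in>{..<r}.
              ((\<Oplus>\<^bsub>F\<^esub>ab\<in>{..<m} \<times> {..<p}. u q (fst ab) (snd ab) \<otimes>\<^bsub>F\<^esub> X (fst ab) (snd ab))
               \<otimes>\<^bsub>F\<^esub>
               (\<Oplus>\<^bsub>F\<^esub>bc\<in>{..<p} \<times> {..<n}. v q (fst bc) (snd bc) \<otimes>\<^bsub>F\<^esub> Y (fst bc) (snd bc)))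
              \<otimes>\<^bsub>F\<^esub> w q a c)))"

lemma bilinear_alg_iff: "bilinear_alg F p m n r \<longleftrightarrow> (\<exists>u v w. is_bilinear_alg F p m n r u v w)"
  unfolding bilinear_alg_def is_bilinear_alg_def ..

section \<open>The coding scheme\<close>

text \<open>B is encoded by the same formula as A, so the lemmas about encA serve for both.\<close>

lemma encB_eq_encA: "encB = encA"
  by (intro ext) (simp add: encA_def encB_def)

text \<open>Below, the nodes \<beta>_q are pt q (q < Rk), the worker points \<alpha>_i are pt (Rk + i) (i < N),
  P is vanish, and the random tensors are the masks \<rho> and \<sigma>.\<close>

locale private_bilinear_code = field R for R :: "'a ring" (structure) +
  fixes p m n M N s t r Rk :: nat
    and pt :: "nat \<Rightarrow> 'a"
    and u v w :: "nat \<Rightarrow> nat \<Rightarrow> nat \<Rightarrow> 'a"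
  assumes finite_carrier: "finite (carrier R)"
    and pt_closed: "pt i \<in> carrier R"
    and pt_inj: "inj_on pt {..<Rk + N}"
    and bilinear_alg: "is_bilinear_alg R p m n Rk u v w"
    and p_dvd_s: "p dvd s"
begin

lemma u_closed: "q < Rk \<Longrightarrow> a < m \<Longrightarrow> b < p \<Longrightarrow> u q a b \<in> carrier R"
  and v_closed: "q < Rk \<Longrightarrow> b < p \<Longrightarrow> c < n \<Longrightarrow> v q b c \<in> carrier R"
  and w_closed: "q < Rk \<Longrightarrow> a < m \<Longrightarrow> c < n \<Longrightarrow> w q a c \<in> carrier R"
  using bilinear_alg unfolding is_bilinear_alg_def by blast+

definition ulin :: "nat \<Rightarrow> 'a mat \<Rightarrow> 'a" where
  "ulin q X = (\<Oplus>ab\<in>{..<m} \<times> {..<p}. u q (fst ab) (snd ab) \<otimes> X (fst ab) (snd ab))"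

definition vlin :: "nat \<Rightarrow> 'a mat \<Rightarrow> 'a" where
  "vlin q Y = (\<Oplus>bc\<in>{..<p} \<times> {..<n}. v q (fst bc) (snd bc) \<otimes> Y (fst bc) (snd bc))"

lemma bilinear:
  "mat_in R m p X \<Longrightarrow> mat_in R p n Y \<Longrightarrow> a < m \<Longrightarrow> c < n \<Longrightarrow>
    (\<Oplus>b\<in>{..<p}. X a b \<otimes> Y b c) = (\<Oplus>q\<in>{..<Rk}. (ulin q X \<otimes> vlin q Y) \<otimes> w q a c)"
  using bilinear_alg unfolding is_bilinear_alg_def ulin_def vlin_def by blast

lemma ulin_closed: "q < Rk \<Longrightarrow> mat_in R m p X \<Longrightarrow> ulin q X \<in> carrier R"
  unfolding ulin_def mat_in_def using u_closed by (auto intro!: finsum_closed)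

lemma vlin_closed: "q < Rk \<Longrightarrow> mat_in R p n Y \<Longrightarrow> vlin q Y \<in> carrier R"
  unfolding vlin_def mat_in_def using v_closed by (auto intro!: finsum_closed)

lemma nodes_inj: "inj_on pt {..<Rk}"
  by (rule inj_on_subset[OF pt_inj]) auto

definition vanish :: "'a \<Rightarrow> 'a" where
  "vanish z = (\<Otimes>q\<in>{..<Rk}. z \<ominus> pt q)"

lemma vanish_node: "q < Rk \<Longrightarrow> vanish (pt q) = \<zero>"
  unfolding vanish_def using pt_closed by (subst finprod_sub_eq_zero_iff) auto

lemma vanish_worker: "i < N \<Longrightarrow> vanish (pt (Rk + i)) \<noteq> \<zero>"
  unfolding vanish_def using pt_closed pt_inj
  by (subst finprod_sub_eq_zero_iff) (auto dest: inj_onD)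

lemma polyfun_vanish: "polyfun R Rk vanish"
  using polyfun_finprod_linear[of "{..<Rk}" pt] pt_closed unfolding vanish_def by simp

lemma vanish_closed: "z \<in> carrier R \<Longrightarrow> vanish z \<in> carrier R"
  using polyfun_closed[OF polyfun_vanish] .

definition blocks :: "nat \<Rightarrow> nat \<Rightarrow> nat \<Rightarrow> nat \<Rightarrow> bool" where
  "blocks k l uu j \<longleftrightarrow> l < M \<and> uu < p \<and> j < k"

definition interp :: "(nat \<Rightarrow> nat \<Rightarrow> nat \<Rightarrow> 'a) \<Rightarrow> 'a \<Rightarrow> nat \<Rightarrow> nat \<Rightarrow> 'a" where
  "interp co z uu j = (\<Oplus>q\<in>{..<Rk}. lagrange_basis R pt {..<Rk} q z \<otimes> co q uu j)"

definition enc_coeffs :: "(nat \<Rightarrow> nat \<Rightarrow> nat \<Rightarrow> 'a) \<Rightarrow> nat \<Rightarrow> nat \<Rightarrow> 'a \<Rightarrow>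
    (nat \<Rightarrow> nat \<Rightarrow> nat \<Rightarrow> 'a) \<Rightarrow> nat \<Rightarrow> nat \<Rightarrow> nat \<Rightarrow> 'a" where
  "enc_coeffs co k d z =
     affine_mask R (blocks k) (\<lambda>l uu j. if l = d then interp co z uu j else \<zero>) (vanish z)"

lemma polyfun_lagrange_node: "q < Rk \<Longrightarrow> polyfun R Rk (lagrange_basis R pt {..<Rk} q)"
  using polyfun_lagrange_basis[of "{..<Rk}" pt q] nodes_inj pt_closed by auto

lemma lagrange_node_closed: "q < Rk \<Longrightarrow> z \<in> carrier R \<Longrightarrow> lagrange_basis R pt {..<Rk} q z \<in> carrier R"
  using lagrange_basis_closed[of "{..<Rk}" pt q z] nodes_inj pt_closed by auto

lemma lagrange_node:
  "q' < Rk \<Longrightarrow> q < Rk \<Longrightarrow> lagrange_basis R pt {..<Rk} q' (pt q) = (if q = q' then \<one> else \<zero>)"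
  using lagrange_basis_node[of "{..<Rk}" pt q' q] nodes_inj pt_closed by (auto simp: image_subset_iff)

lemma interp_closed:
  assumes "\<And>q uu j. q < Rk \<Longrightarrow> uu < p \<Longrightarrow> j < k \<Longrightarrow> co q uu j \<in> carrier R"
    and "z \<in> carrier R" "uu < p" "j < k"
  shows "interp co z uu j \<in> carrier R"
  unfolding interp_def using assms by (auto intro!: finsum_closed lagrange_node_closed)

lemma polyfun_interp:
  assumes "\<And>q uu j. q < Rk \<Longrightarrow> uu < p \<Longrightarrow> j < k \<Longrightarrow> co q uu j \<in> carrier R"
    and "uu < p" "j < k"
  shows "polyfun R Rk (\<lambda>z. interp co z uu j)"
  unfolding interp_def
  by (rule polyfun_finsum) (use assms in \<open>auto intro!: polyfun_mult_const polyfun_lagrange_node\<close>)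

lemma interp_node:
  assumes "\<And>q uu j. q < Rk \<Longrightarrow> uu < p \<Longrightarrow> j < k \<Longrightarrow> co q uu j \<in> carrier R"
    and "q < Rk" "uu < p" "j < k"
  shows "interp co (pt q) uu j = co q uu j"
proof -
  have "interp co (pt q) uu j = lagrange_basis R pt {..<Rk} q (pt q) \<otimes> co q uu j"
    unfolding interp_def using assms nodes_inj pt_closed
    by (intro finsum_eq_single) (auto simp: lagrange_node)
  then show ?thesis using assms by (simp add: lagrange_node)
qed

lemma enc_coeffs_in_masks:
  assumes "\<And>q uu j. q < Rk \<Longrightarrow> uu < p \<Longrightarrow> j < k \<Longrightarrow> co q uu j \<in> carrier R"
    and "z \<in> carrier R" "\<rho> \<in> masks R (blocks k)"
  shows "enc_coeffs co k d z \<rho> \<in> masks R (blocks k)"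
  unfolding enc_coeffs_def
  by (rule affine_mask_in_masks) (use assms in \<open>auto simp: blocks_def interp_closed[OF assms(1)] vanish_closed\<close>)

lemma polyfun_enc_coeffs:
  assumes "\<And>q uu j. q < Rk \<Longrightarrow> uu < p \<Longrightarrow> j < k \<Longrightarrow> co q uu j \<in> carrier R"
    and "\<rho> \<in> masks R (blocks k)"
  shows "polyfun R Rk (\<lambda>z. enc_coeffs co k d z \<rho> l uu j)"
proof (cases "blocks k l uu j")
  case True
  then have "polyfun R Rk (\<lambda>z. if l = d then interp co z uu j else \<zero>)"
    by (cases "l = d") (auto simp: blocks_def polyfun_interp[OF assms(1)] polyfun_const)
  then have "polyfun R Rk (\<lambda>z. (if l = d then interp co z uu j else \<zero>) \<oplus> vanish z \<otimes> \<rho> l uu j)"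
    using masks_closed[OF assms(2) True] by (intro polyfun_add polyfun_mult_const polyfun_vanish)
  then show ?thesis using True by (simp add: enc_coeffs_def affine_mask_def)
next
  case False
  then show ?thesis by (simp add: enc_coeffs_def affine_mask_def polyfun_const)
qed

lemma enc_coeffs_node:
  assumes "\<And>q uu j. q < Rk \<Longrightarrow> uu < p \<Longrightarrow> j < k \<Longrightarrow> co q uu j \<in> carrier R"
    and "\<rho> \<in> masks R (blocks k)" "q < Rk" "blocks k l uu j"
  shows "enc_coeffs co k d (pt q) \<rho> l uu j = (if l = d then co q uu j else \<zero>)"
  using assms masks_closed[OF assms(2,4)]
  by (auto simp: enc_coeffs_def affine_mask_def blocks_def vanish_node interp_node[OF assms(1)])

lemma bij_betw_enc_coeffs:
  assumes "\<And>q uu j. q < Rk \<Longrightarrow> uu < p \<Longrightarrow> j < k \<Longrightarrow> co q uu j \<in> carrier R" "i < N"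
  shows "bij_betw (enc_coeffs co k d (pt (Rk + i))) (masks R (blocks k)) (masks R (blocks k))"
  unfolding enc_coeffs_def
  by (rule bij_betw_affine_mask)
    (use assms pt_closed in \<open>auto simp: blocks_def interp_closed[OF assms(1)] vanish_closed vanish_worker\<close>)

lemma block_entry_closed:
  assumes "\<forall>l<M. mat_in R s cols (X l)" "l < M" "uu < p" "z0 < s div p" "j < k" "x < cols div k"
  shows "X l (uu * (s div p) + z0) (j * (cols div k) + x) \<in> carrier R"
  using assms block_index_less_dividend unfolding mat_in_def by blast

lemma polyfun_encA:
  assumes "\<And>q uu j. q < Rk \<Longrightarrow> uu < p \<Longrightarrow> j < k \<Longrightarrow> co q uu j \<in> carrier R"
    and "\<rho> \<in> masks R (blocks k)" "\<forall>l<M. mat_in R s cols (X l)" "z0 < s div p" "x < cols div k"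
  shows "polyfun R Rk (\<lambda>z. encA R p k M s cols (enc_coeffs co k d z \<rho>) X z0 x)"
  unfolding encA_def
  by (rule polyfun_finsum)
    (use assms in \<open>auto intro!: polyfun_mult_const polyfun_enc_coeffs[OF assms(1,2)] block_entry_closed\<close>)

lemma encA_node:
  assumes "\<And>q uu j. q < Rk \<Longrightarrow> uu < p \<Longrightarrow> j < k \<Longrightarrow> co q uu j \<in> carrier R"
    and "\<rho> \<in> masks R (blocks k)" "\<forall>l<M. mat_in R s cols (X l)" "z0 < s div p" "x < cols div k"
    and "q < Rk" "d < M"
  shows "encA R p k M s cols (enc_coeffs co k d (pt q) \<rho>) X z0 x =
    (\<Oplus>uj\<in>{..<p} \<times> {..<k}. co q (fst uj) (snd uj) \<otimes> X d (fst uj * (s div p) + z0) (snd uj * (cols div k) + x))"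
proof -
  let ?g = "\<lambda>l uj. enc_coeffs co k d (pt q) \<rho> l (fst uj) (snd uj) \<otimes>
    X l (fst uj * (s div p) + z0) (snd uj * (cols div k) + x)"
  have "enc_coeffs co k d (pt q) \<rho> \<in> masks R (blocks k)"
    by (rule enc_coeffs_in_masks) (use assms pt_closed in auto)
  then have g_closed: "?g l uj \<in> carrier R" if "l < M" "uj \<in> {..<p} \<times> {..<k}" for l uj
    using that assms block_entry_closed[OF assms(3) that(1) _ assms(4) _ assms(5)]
    by (auto simp: blocks_def masks_closed)
  have "encA R p k M s cols (enc_coeffs co k d (pt q) \<rho>) X z0 x = (\<Oplus>l\<in>{..<M}. \<Oplus>uj\<in>{..<p} \<times> {..<k}. ?g l uj)"
    unfolding encA_def using finsum_cartesian_product[of "{..<M}" "{..<p} \<times> {..<k}" "\<lambda>luj. ?g (fst luj) (snd luj)"]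
      g_closed by simp
  also have "\<dots> = (\<Oplus>uj\<in>{..<p} \<times> {..<k}. ?g d uj)"
    using assms g_closed
    by (intro finsum_eq_single add.finprod_one_eqI)
      (auto simp: enc_coeffs_node[OF assms(1,2)] blocks_def block_entry_closed intro!: finsum_closed)
  also have "\<dots> = (\<Oplus>uj\<in>{..<p} \<times> {..<k}. co q (fst uj) (snd uj) \<otimes> X d (fst uj * (s div p) + z0) (snd uj * (cols div k) + x))"
    using assms by (intro finsum_cong') (auto simp: enc_coeffs_node[OF assms(1,2)] blocks_def block_entry_closed)
  finally show ?thesis .
qed

text \<open>A_slice is transposed because the master wants (A^(d))^T B^(d): its entry (a, b) lies in
  block (b, a) of A^(d).\<close>

definition A_slice :: "(nat \<Rightarrow> 'a mat) \<Rightarrow> nat \<Rightarrow> nat \<Rightarrow> nat \<Rightarrow> 'a mat" where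
  "A_slice A d x z0 = (\<lambda>a b. A d (b * (s div p) + z0) (a * (t div m) + x))"

definition B_slice :: "(nat \<Rightarrow> 'a mat) \<Rightarrow> nat \<Rightarrow> nat \<Rightarrow> nat \<Rightarrow> 'a mat" where
  "B_slice B d y z0 = (\<lambda>b c. B d (b * (s div p) + z0) (c * (r div n) + y))"

lemma mat_in_A_slice:
  "\<forall>l<M. mat_in R s t (A l) \<Longrightarrow> d < M \<Longrightarrow> z0 < s div p \<Longrightarrow> x < t div m \<Longrightarrow> mat_in R m p (A_slice A d x z0)"
  unfolding A_slice_def mat_in_def[of R m p] using block_entry_closed[of t A d] by blast

lemma mat_in_B_slice:
  "\<forall>l<M. mat_in R s r (B l) \<Longrightarrow> d < M \<Longrightarrow> z0 < s div p \<Longrightarrow> y < r div n \<Longrightarrow> mat_in R p n (B_slice B d y z0)"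
  unfolding B_slice_def mat_in_def[of R p n] using block_entry_closed[of r B d] by blast

definition query :: "nat \<Rightarrow> 'a \<Rightarrow> (nat \<Rightarrow> nat \<Rightarrow> nat \<Rightarrow> 'a) \<Rightarrow> (nat \<Rightarrow> nat \<Rightarrow> nat \<Rightarrow> 'a) \<Rightarrow> 'a query" where
  "query d z \<rho> \<sigma> = (enc_coeffs (\<lambda>q uu j. u q j uu) m d z \<rho>, enc_coeffs v n d z \<sigma>)"

lemma worker_result_query:
  "worker_result R p m n M s t r (query d z \<rho> \<sigma>) A B x y =
    (\<Oplus>z0\<in>{..<s div p}. encA R p m M s t (enc_coeffs (\<lambda>q uu j. u q j uu) m d z \<rho>) A z0 x \<otimes>
                        encA R p n M s r (enc_coeffs v n d z \<sigma>) B z0 y)"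
  by (simp add: worker_result_def query_def encB_eq_encA)

lemma polyfun_worker_result:
  assumes "\<rho> \<in> masks R (blocks m)" "\<sigma> \<in> masks R (blocks n)"
    and "\<forall>l<M. mat_in R s t (A l)" "\<forall>l<M. mat_in R s r (B l)" "x < t div m" "y < r div n"
  shows "polyfun R (Rk + Rk) (\<lambda>z. worker_result R p m n M s t r (query d z \<rho> \<sigma>) A B x y)"
  unfolding worker_result_query
  by (rule polyfun_finsum) (use assms u_closed v_closed in \<open>auto intro!: polyfun_mult polyfun_encA\<close>)

lemma worker_result_node:
  assumes "\<rho> \<in> masks R (blocks m)" "\<sigma> \<in> masks R (blocks n)"
    and "\<forall>l<M. mat_in R s t (A l)" "\<forall>l<M. mat_in R s r (B l)" "x < t div m" "y < r div n"
    and "q < Rk" "d < M"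
  shows "worker_result R p m n M s t r (query d (pt q) \<rho> \<sigma>) A B x y =
    (\<Oplus>z0\<in>{..<s div p}. ulin q (A_slice A d x z0) \<otimes> vlin q (B_slice B d y z0))"
  unfolding worker_result_query
proof (rule finsum_cong')
  fix z0 assume "z0 \<in> {..<s div p}"
  then have z0: "z0 < s div p" by simp
  have "encA R p m M s t (enc_coeffs (\<lambda>q uu j. u q j uu) m d (pt q) \<rho>) A z0 x =
    (\<Oplus>uj\<in>{..<p} \<times> {..<m}. u q (snd uj) (fst uj) \<otimes> A d (fst uj * (s div p) + z0) (snd uj * (t div m) + x))"
    using assms z0 u_closed by (intro encA_node) auto
  also have "\<dots> = ulin q (A_slice A d x z0)"
    using mat_in_A_slice[of A d z0 x] assms z0 u_closed unfolding ulin_def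
    by (subst finsum_product_swap) (auto simp: mat_in_def A_slice_def)
  finally have "encA R p m M s t (enc_coeffs (\<lambda>q uu j. u q j uu) m d (pt q) \<rho>) A z0 x = ulin q (A_slice A d x z0)" .
  moreover have "encA R p n M s r (enc_coeffs v n d (pt q) \<sigma>) B z0 y = vlin q (B_slice B d y z0)"
    unfolding vlin_def B_slice_def using assms z0 v_closed by (subst encA_node) auto
  ultimately show "encA R p m M s t (enc_coeffs (\<lambda>q uu j. u q j uu) m d (pt q) \<rho>) A z0 x \<otimes>
      encA R p n M s r (enc_coeffs v n d (pt q) \<sigma>) B z0 y =
      ulin q (A_slice A d x z0) \<otimes> vlin q (B_slice B d y z0)" by simp
qed (use assms in \<open>auto intro!: ulin_closed vlin_closed mat_in_A_slice mat_in_B_slice\<close>)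

lemma target_bilinear:
  assumes "\<forall>l<M. mat_in R s t (A l)" "\<forall>l<M. mat_in R s r (B l)"
    and "d < M" "j < m" "k < n" "x < t div m" "y < r div n"
  shows "target R s A B d (j * (t div m) + x) (k * (r div n) + y) =
    (\<Oplus>q\<in>{..<Rk}. w q j k \<otimes> (\<Oplus>z0\<in>{..<s div p}. ulin q (A_slice A d x z0) \<otimes> vlin q (B_slice B d y z0)))"
proof -
  let ?X = "A_slice A d x" and ?Y = "B_slice B d y"
  have X: "mat_in R m p (?X z0)" and Y: "mat_in R p n (?Y z0)" if "z0 < s div p" for z0
    using assms that by (auto intro: mat_in_A_slice mat_in_B_slice)
  have "{..<s} = {..<p * (s div p)}" using p_dvd_s by simp
  then have "target R s A B d (j * (t div m) + x) (k * (r div n) + y) =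
      (\<Oplus>z\<in>{..<p * (s div p)}. A d z (j * (t div m) + x) \<otimes> B d z (k * (r div n) + y))"
    unfolding target_def by simp
  also have "\<dots> = (\<Oplus>uu\<in>{..<p}. \<Oplus>z0\<in>{..<s div p}. ?X z0 j uu \<otimes> ?Y z0 uu k)"
  proof -
    have "j * (t div m) + x < t" "k * (r div n) + y < r"
      using assms by (auto intro: block_index_less_dividend)
    moreover have "z < s" if "z < p * (s div p)" for z
      using that times_div_less_eq_dividend[of p s] by linarith
    ultimately show ?thesis
      unfolding A_slice_def B_slice_def using assms
      by (intro finsum_lessThan_mult) (auto simp: mat_in_def)
  qed
  also have "\<dots> = (\<Oplus>z0\<in>{..<s div p}. \<Oplus>uu\<in>{..<p}. ?X z0 j uu \<otimes> ?Y z0 uu k)"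
    using X Y assms by (intro finsum_swap) (auto simp: mat_in_def)
  also have "\<dots> = (\<Oplus>z0\<in>{..<s div p}. \<Oplus>q\<in>{..<Rk}. (ulin q (?X z0) \<otimes> vlin q (?Y z0)) \<otimes> w q j k)"
    using X Y assms by (intro finsum_cong' refl bilinear) (auto intro!: finsum_closed ulin_closed vlin_closed w_closed)
  also have "\<dots> = (\<Oplus>q\<in>{..<Rk}. w q j k \<otimes> (\<Oplus>z0\<in>{..<s div p}. ulin q (?X z0) \<otimes> vlin q (?Y z0)))"
    using X Y assms by (intro finsum_swap_scale) (auto intro: ulin_closed vlin_closed w_closed)
  finally show ?thesis .
qed

lemma worker_interpolation_weights:
  assumes "S \<subseteq> {..<N}"
  obtains \<Gamma> where "\<And>q i. i \<in> S \<Longrightarrow> \<Gamma> q i \<in> carrier R"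
    "\<And>q e f. polyfun R e f \<Longrightarrow> e < card S \<Longrightarrow> (\<Oplus>i\<in>S. \<Gamma> q i \<otimes> f (pt (Rk + i))) = f (pt q)"
proof -
  have S: "finite S" using assms finite_subset by blast
  have "inj_on (\<lambda>i. pt (Rk + i)) S"
  proof (rule inj_onI)
    fix i i' assume "i \<in> S" "i' \<in> S" "pt (Rk + i) = pt (Rk + i')"
    then show "i = i'" using assms inj_onD[OF pt_inj, of "Rk + i" "Rk + i'"] by auto
  qed
  then have "\<exists>\<gamma>. (\<forall>i\<in>S. \<gamma> i \<in> carrier R) \<and> (\<forall>e f. polyfun R e f \<longrightarrow> e < card S \<longrightarrow>
      (\<Oplus>i\<in>S. \<gamma> i \<otimes> f (pt (Rk + i))) = f (pt q))" for q
    using S pt_closed by (intro polyfun_interpolation) auto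
  then show ?thesis using that by metis
qed

lemma worker_decoding:
  assumes "\<rho> \<in> masks R (blocks m)" "\<sigma> \<in> masks R (blocks n)" "d < M"
    and "S \<subseteq> {..<N}" "card S = 2 * Rk + 1"
  shows "\<exists>c. (\<forall>j<m. \<forall>k<n. \<forall>i\<in>S. c j k i \<in> carrier R) \<and>
    (\<forall>A B. (\<forall>l<M. mat_in R s t (A l)) \<longrightarrow> (\<forall>l<M. mat_in R s r (B l)) \<longrightarrow>
      (\<forall>j<m. \<forall>k<n. \<forall>x<t div m. \<forall>y<r div n.
         target R s A B d (j * (t div m) + x) (k * (r div n) + y) =
         (\<Oplus>i\<in>S. c j k i \<otimes> worker_result R p m n M s t r (query d (pt (Rk + i)) \<rho> \<sigma>) A B x y)))"
proof -
  have S: "finite S" using assms(4) finite_subset by blast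
  obtain \<Gamma> where \<Gamma>_closed: "\<And>q i. i \<in> S \<Longrightarrow> \<Gamma> q i \<in> carrier R"
    and \<Gamma>_interp: "\<And>q e f. polyfun R e f \<Longrightarrow> e < card S \<Longrightarrow>
      (\<Oplus>i\<in>S. \<Gamma> q i \<otimes> f (pt (Rk + i))) = f (pt q)"
    using worker_interpolation_weights[OF assms(4)] by blast
  define c where "c j k i = (\<Oplus>q\<in>{..<Rk}. w q j k \<otimes> \<Gamma> q i)" for j k i
  show ?thesis
  proof (intro exI[of _ c] conjI allI impI ballI)
    fix j k i assume "j < m" "k < n" "i \<in> S"
    then show "c j k i \<in> carrier R" unfolding c_def using \<Gamma>_closed w_closed by (auto intro!: finsum_closed)
  next
    fix A B j k x y
    assume data: "\<forall>l<M. mat_in R s t (A l)" "\<forall>l<M. mat_in R s r (B l)"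
      and jk: "j < m" "k < n" and xy: "x < t div m" "y < r div n"
    let ?W = "\<lambda>z. worker_result R p m n M s t r (query d z \<rho> \<sigma>) A B x y"
    have W: "polyfun R (Rk + Rk) ?W" using polyfun_worker_result assms data xy by blast
    have "(\<Oplus>i\<in>S. c j k i \<otimes> ?W (pt (Rk + i))) = (\<Oplus>q\<in>{..<Rk}. w q j k \<otimes> (\<Oplus>i\<in>S. \<Gamma> q i \<otimes> ?W (pt (Rk + i))))"
      unfolding c_def using S \<Gamma>_closed w_closed jk pt_closed polyfun_closed[OF W]
      by (intro finsum_weighted_swap) auto
    also have "\<dots> = (\<Oplus>q\<in>{..<Rk}. w q j k \<otimes> ?W (pt q))"
      using \<Gamma>_interp[OF W] assms(5) by simp
    also have "\<dots> = target R s A B d (j * (t div m) + x) (k * (r div n) + y)"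
      unfolding target_bilinear[OF data assms(3) jk xy]
      using worker_result_node[OF assms(1,2) data xy _ assms(3)] data assms(3) jk xy
      by (intro finsum_cong' refl)
        (auto intro!: m_closed w_closed finsum_closed ulin_closed vlin_closed mat_in_A_slice mat_in_B_slice)
    finally show "target R s A B d (j * (t div m) + x) (k * (r div n) + y) =
      (\<Oplus>i\<in>S. c j k i \<otimes> worker_result R p m n M s t r (query d (pt (Rk + i)) \<rho> \<sigma>) A B x y)" ..
  qed
qed

definition scheme :: "nat \<Rightarrow> (nat \<Rightarrow> 'a query) pmf" where
  "scheme d = map_pmf (\<lambda>(\<rho>, \<sigma>) i. query d (pt (Rk + i)) \<rho> \<sigma>)
     (pmf_of_set (masks R (blocks m) \<times> masks R (blocks n)))"

lemma finite_masks_blocks: "finite (masks R (blocks k))"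
  by (rule finite_masks[OF finite_carrier], rule finite_subset[of _ "{..<M} \<times> {..<p} \<times> {..<k}"])
    (auto simp: blocks_def)

lemma set_pmf_scheme:
  "set_pmf (scheme d) = (\<lambda>(\<rho>, \<sigma>) i. query d (pt (Rk + i)) \<rho> \<sigma>) ` (masks R (blocks m) \<times> masks R (blocks n))"
  unfolding scheme_def using finite_masks_blocks masks_nonempty by (simp add: set_pmf_of_set)

lemma query_distribution:
  assumes "i < N"
  shows "map_pmf (\<lambda>Q. Q i) (scheme d) = pmf_of_set (masks R (blocks m) \<times> masks R (blocks n))"
proof -
  let ?z = "pt (Rk + i)"
  have "map_pmf (\<lambda>Q. Q i) (scheme d) =
      map_pmf (map_prod (enc_coeffs (\<lambda>q uu j. u q j uu) m d ?z) (enc_coeffs v n d ?z))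
        (pmf_of_set (masks R (blocks m) \<times> masks R (blocks n)))"
    unfolding scheme_def map_pmf_comp by (rule map_pmf_cong) (auto simp: query_def)
  also have "\<dots> = pmf_of_set (masks R (blocks m) \<times> masks R (blocks n))"
    using assms finite_masks_blocks masks_nonempty u_closed v_closed
    by (intro map_pmf_of_set_bij_betw bij_betw_map_prod bij_betw_enc_coeffs) auto
  finally show ?thesis .
qed

lemma scheme_valid: "valid_private_scheme R p m n M N scheme"
  unfolding valid_private_scheme_def set_pmf_scheme query_distribution
  using finite_masks_blocks pt_closed u_closed v_closed
  by (auto simp: query_in_def query_def query_distribution masks_closed blocks_def
      intro!: masks_closed[OF enc_coeffs_in_masks])

lemma scheme_threshold: "achieves_threshold R p m n M N s t r scheme (2 * Rk + 1)"
  unfolding achieves_threshold_def set_pmf_scheme using worker_decoding by fastforce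

end

theorem theorem3:
  fixes p m n M N s t r :: nat
  assumes "p \<ge> 1" and "m \<ge> 1" and "n \<ge> 1" and "M > 1"
    and "p dvd s" and "m dvd t" and "n dvd r"
  shows "\<exists>q0::nat. \<forall>F :: 'a ring.
           field F \<and> finite (carrier F) \<and> card (carrier F) \<ge> q0 \<longrightarrow>
           (\<exists>mu. valid_private_scheme F p m n M N mu \<and>
                 achieves_threshold F p m n M N s t r mu (2 * bilinear_complexity F p m n + 1))"
proof (intro exI[of _ "N + m * (p * n)"] allI impI)
  fix F :: "'a ring"
  assume F: "field F \<and> finite (carrier F) \<and> N + m * (p * n) \<le> card (carrier F)"
  then interpret field F by simp
  define Rk where "Rk = bilinear_complexity F p m n"
  obtain u v w where uvw: "is_bilinear_alg F p m n Rk u v w"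
    using bilinear_complexity_attained(1)[OF is_ring] unfolding Rk_def bilinear_alg_iff by blast
  have "Rk + N \<le> card (carrier F)"
    using bilinear_complexity_attained(2)[OF is_ring, of p m n] F unfolding Rk_def by linarith
  then obtain pt where "inj_on pt {..<Rk + N}" "\<And>i. pt i \<in> carrier F"
    using ex_inj_on_lessThan[of "carrier F" "\<zero>\<^bsub>F\<^esub>"] F by auto
  then interpret private_bilinear_code F p m n M N s t r Rk pt u v w
    using F uvw assms(5) by unfold_locales auto
  show "\<exists>mu. valid_private_scheme F p m n M N mu \<and>
      achieves_threshold F p m n M N s t r mu (2 * bilinear_complexity F p m n + 1)"
    using scheme_valid scheme_threshold unfolding Rk_def by blast
qed

end
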